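(* For every $m\in\mathbb{N}_0$ and every complex $s=\sigma+it$ with $\sigma>1/2$, $$\sum_{n=0}^{+\infty}\binom{n+m}{n}\left|\ell_n^{(m)}\right|\left|\frac{1-s}{s}\right|^n\le\left(\frac{1}{m!}\int_1^{+\infty}\frac{\{x\}^2\log^m x}{x^2}\mathrm{d}x\right)^{1/2}\left(\frac{|s|}{\sqrt{2\sigma-1}}\right)^{m+1}<\infty .$$
   Context: $\{x\}=x-\lfloor x\rfloor$; $\ell_n^{(m)}=-\delta_{n,0}+\sum_{k=0}^n\binom{n}{k}(-1)^{n-k}\sum_{j=0}^{m+k}\frac{\gamma_j}{j!}$, where $\delta_{n,k}$ is the Kronecker delta and $\gamma_j=\lim_{N\to\infty}\left(\sum_{k=1}^N\frac{\log^j k}{k}-\frac{\log^{j+1}N}{j+1}\right)$ are the Stieltjes constants. *)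

theory Defs
  imports "HOL-Analysis.Analysis"
begin

definition stieltjes :: "nat \<Rightarrow> real" where
  "stieltjes j = lim (\<lambda>N::nat. (\<Sum>k=1..N. ln (real k) ^ j / real k)
                                 - ln (real N) ^ (Suc j) / real (Suc j))"

definition ell :: "nat \<Rightarrow> nat \<Rightarrow> real" where
  "ell m n = - (if n = 0 then 1 else 0)
     + (\<Sum>k=0..n. real (n choose k) * (-1) ^ (n - k)
          * (\<Sum>j=0..m+k. stieltjes j / fact j))"

end

theory Submission
  imports Defs
begin

text \<open>Put \<open>E\<^sub>p = (1/p!) \<integral>\<^sub>1\<^sup>\<infinity> {x} ln\<^sup>p x / x\<^sup>2 dx\<close>. Writing the Stieltjes constants as
  \<open>\<gamma>\<^sub>j = \<delta>\<^sub>j\<^sub>0 + \<integral>\<^sub>1\<^sup>\<infinity> {x} (ln\<^sup>j x / x)' dx\<close> gives \<open>\<Sum>\<^sub>j\<^sub>\<le>\<^sub>M \<gamma>\<^sub>j / j! = 1 - E\<^sub>M\<close>, hence \<open>\<ell>\<^sub>n\<^sup>(\<^sup>m\<^sup>)\<close> is minus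
  the \<open>n\<close>-th forward difference of \<open>k \<mapsto> E\<^sub>m\<^sub>+\<^sub>k\<close>. That makes \<open>-\<ell>\<^sub>n\<^sup>(\<^sup>m\<^sup>)\<close> the coefficient of \<open>{x}\<close>
  against \<open>q\<^sub>n(ln x)\<close>, where the \<open>q\<^sub>n\<close> are rescaled generalised Laguerre polynomials,
  orthogonal for the weight \<open>ln\<^sup>m x / x\<^sup>2\<close> on \<open>[1, \<infinity>)\<close> with \<open>\<integral> q\<^sub>n\<^sup>2 = n!/(n+m)!\<close>. Bessel's
  inequality then bounds \<open>\<Sum> C(n+m,n) (\<ell>\<^sub>n\<^sup>(\<^sup>m\<^sup>))\<^sup>2\<close> by \<open>(1/m!) \<integral>\<^sub>1\<^sup>\<infinity> {x}\<^sup>2 ln\<^sup>m x / x\<^sup>2 dx\<close>, and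
  Cauchy-Schwarz against \<open>\<Sum> C(n+m,n) r\<^sup>2\<^sup>n = (1 - r\<^sup>2)\<^sup>-\<^sup>m\<^sup>-\<^sup>1\<close>, where \<open>r = |(1-s)/s|\<close> and
  \<open>1 - r\<^sup>2 = (2\<sigma> - 1)/|s|\<^sup>2\<close>, gives the claim.\<close>

section \<open>Integrals of powers of the logarithm\<close>

lemma tendsto_ln_power_over_x_at_top: "((\<lambda>x::real. ln x ^ p / x) \<longlongrightarrow> 0) at_top"
proof -
  have "((\<lambda>x::real. ln x ^ p / exp (ln x)) \<longlongrightarrow> 0) at_top"
    using filterlim_compose[OF tendsto_power_div_exp_0[of p] ln_at_top] by (simp only: o_def)
  moreover have "\<forall>\<^sub>F x in at_top. ln x ^ p / exp (ln x) = ln x ^ p / (x::real)"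
    using eventually_gt_at_top[of 0] by eventually_elim simp
  ultimately show ?thesis by (rule Lim_transform_eventually)
qed

primrec ln_power_over_sq_primitive :: "nat \<Rightarrow> real \<Rightarrow> real" where
  "ln_power_over_sq_primitive 0 x = - 1 / x"
| "ln_power_over_sq_primitive (Suc p) x =
     - (ln x ^ Suc p / x) + real (Suc p) * ln_power_over_sq_primitive p x"

lemma has_real_derivative_ln_power:
  assumes "x > 0"
  shows "((\<lambda>x. ln x ^ p) has_real_derivative real p * ln x ^ (p - 1) / x) (at x)"
  using assms by (auto intro!: derivative_eq_intros)

lemma ln_power_over_sq_primitive_deriv:
  assumes "x > 0"
  shows "(ln_power_over_sq_primitive p has_real_derivative ln x ^ p / x\<^sup>2) (at x)"
  using assms
proof (induction p)
  case 0
  then show ?case by (auto intro!: derivative_eq_intros simp: power2_eq_square)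
next
  case (Suc p)
  have "(ln_power_over_sq_primitive (Suc p) has_real_derivative
        - ((real (Suc p) * ln x ^ p / x * x - ln x ^ Suc p * 1) / (x * x))
        + real (Suc p) * (ln x ^ p / x\<^sup>2)) (at x)"
    unfolding ln_power_over_sq_primitive.simps(2)[abs_def]
    using has_real_derivative_ln_power[OF Suc.prems, of "Suc p"] Suc
    by (intro DERIV_add DERIV_minus DERIV_divide DERIV_ident DERIV_cmult) auto
  then show ?case
    by (rule DERIV_cong) (use Suc.prems in \<open>simp add: field_simps power2_eq_square\<close>)
qed

lemma ln_power_over_sq_primitive_tendsto: "(ln_power_over_sq_primitive p \<longlongrightarrow> 0) at_top"
proof (induction p)
  case 0
  show ?case
    using tendsto_minus[OF tendsto_ln_power_over_x_at_top[of 0]] by simp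
next
  case (Suc p)
  have "((\<lambda>x. - (ln x ^ Suc p / x) + real (Suc p) * ln_power_over_sq_primitive p x)
          \<longlongrightarrow> - 0 + real (Suc p) * 0) at_top"
    by (intro tendsto_intros tendsto_ln_power_over_x_at_top Suc.IH)
  then show ?case by simp
qed

lemma ln_power_over_sq_primitive_at_1: "ln_power_over_sq_primitive p 1 = - fact p"
  by (induction p) auto

lemma has_integral_ln_power_over_sq: "((\<lambda>x::real. ln x ^ p / x\<^sup>2) has_integral fact p) {1..}"
proof (rule has_integral_to_inf)
  have ftc: "((\<lambda>x. ln x ^ p / x\<^sup>2) has_integral
               ln_power_over_sq_primitive p y - ln_power_over_sq_primitive p 1) {1..y}"
    if "y \<ge> 1" for y :: real
    using that
    by (intro fundamental_theorem_of_calculus)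
       (auto intro!: has_field_derivative_at_within ln_power_over_sq_primitive_deriv
             simp flip: has_real_derivative_iff_has_vector_derivative)
  show "(\<lambda>x. ln x ^ p / x\<^sup>2) integrable_on {1..y}" for y :: real
    using ftc[of y] by (cases "y \<ge> 1") auto
  have "((\<lambda>y. ln_power_over_sq_primitive p y - ln_power_over_sq_primitive p 1)
          \<longlongrightarrow> fact p) at_top"
    unfolding ln_power_over_sq_primitive_at_1
    using tendsto_add[OF ln_power_over_sq_primitive_tendsto tendsto_const[of "fact p"]] by simp
  moreover have "\<forall>\<^sub>F y in at_top. ln_power_over_sq_primitive p y - ln_power_over_sq_primitive p 1
                    = integral {1..y} (\<lambda>x. ln x ^ p / x\<^sup>2)"
    using eventually_ge_at_top[of 1] by eventually_elim (simp add: integral_unique[OF ftc])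
  ultimately show "((\<lambda>y::real. integral {1..y} (\<lambda>x. ln x ^ p / x\<^sup>2)) \<longlongrightarrow> fact p) at_top"
    by (rule Lim_transform_eventually)
  show "0 \<le> ln y ^ p / y\<^sup>2" if "y \<ge> 1" for y :: real
    using that by simp
qed

lemma absolutely_integrable_bounded_mult_ln_power_over_sq:
  fixes g :: "real \<Rightarrow> real"
  assumes "g \<in> borel_measurable borel" and "bounded (g ` {1..})"
  shows "(\<lambda>x. g x * (ln x ^ p / x\<^sup>2)) absolutely_integrable_on {1..}"
proof (rule absolutely_integrable_bounded_measurable_product_real)
  show "g \<in> borel_measurable (lebesgue_on {1..})"
    using assms(1) by (simp add: measurable_completion measurable_restrict_space1)
  show "(\<lambda>x::real. ln x ^ p / x\<^sup>2) absolutely_integrable_on {1..}"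
    using has_integral_ln_power_over_sq by (intro nonnegative_absolutely_integrable_1) auto
  show "bounded (g ` {1..})" by (fact assms(2))
qed simp

lemma borel_measurable_frac [measurable]: "(frac :: real \<Rightarrow> real) \<in> borel_measurable borel"
  unfolding frac_def by measurable

lemma bounded_frac_power_image: "bounded ((\<lambda>x::real. frac x ^ k) ` S)"
proof -
  have "\<bar>frac x ^ k\<bar> \<le> 1" for x :: real
    by (simp add: power_abs frac_lt_1 less_imp_le power_le_one)
  then show ?thesis by (intro boundedI[of _ 1]) auto
qed

lemma tendsto_integral_atLeastAtMost_at_top:
  fixes f :: "real \<Rightarrow> 'a::euclidean_space"
  assumes "f absolutely_integrable_on {a..}"
  shows "((\<lambda>y. integral {a..y} f) \<longlongrightarrow> integral {a..} f) at_top"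
proof -
  have "((\<lambda>y. LINT x:{a..y}|lebesgue. f x) \<longlongrightarrow> (LINT x:{a..}|lebesgue. f x)) at_top"
    using assms by (intro tendsto_set_lebesgue_integral_at_top) auto
  moreover have "(LINT x:{a..y}|lebesgue. f x) = integral {a..y} f" for y
    by (intro set_lebesgue_integral_eq_integral set_integrable_subset[OF assms]) auto
  moreover have "(LINT x:{a..}|lebesgue. f x) = integral {a..} f"
    using assms by (rule set_lebesgue_integral_eq_integral)
  ultimately show ?thesis by simp
qed

section \<open>Forward differences\<close>

definition forward_difference :: "nat \<Rightarrow> (nat \<Rightarrow> 'a::comm_ring_1) \<Rightarrow> 'a" where
  "forward_difference n F = (\<Sum>k\<le>n. of_nat (n choose k) * (-1) ^ (n - k) * F k)"

lemma forward_difference_Suc: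
  "forward_difference (Suc n) F = forward_difference n (\<lambda>k. F (Suc k) - F k)"
proof -
  define c where "c n k = (of_nat (n choose k) * (-1) ^ (n - k) :: 'a)" for n k
  have pascal: "c (Suc n) (Suc k) = c n k - c n (Suc k)" for k
  proof (cases "k < n")
    case True
    then have "(-1 :: 'a) ^ (n - k) = - ((-1) ^ (n - Suc k))"
      by (simp flip: Suc_diff_Suc)
    then show ?thesis by (simp add: c_def algebra_simps)
  qed (auto simp: c_def not_less le_Suc_eq binomial_eq_0)
  have shift: "(\<Sum>k\<le>n. c n (Suc k) * F (Suc k)) = (\<Sum>k\<le>n. c n k * F k) - c n 0 * F 0"
    using sum.atMost_Suc_shift[of "\<lambda>k. c n k * F k" n] by (simp add: c_def binomial_eq_0)
  have "forward_difference (Suc n) F = c (Suc n) 0 * F 0 + (\<Sum>k\<le>n. c (Suc n) (Suc k) * F (Suc k))"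
    by (simp add: forward_difference_def c_def sum.atMost_Suc_shift mult.assoc del: sum.atMost_Suc)
  also have "\<dots> = - c n 0 * F 0 + (\<Sum>k\<le>n. c n k * F (Suc k)) - (\<Sum>k\<le>n. c n (Suc k) * F (Suc k))"
    by (simp add: pascal left_diff_distrib sum_subtractf c_def[of _ 0])
  also have "\<dots> = (\<Sum>k\<le>n. c n k * F (Suc k)) - (\<Sum>k\<le>n. c n k * F k)"
    by (simp add: shift)
  also have "\<dots> = forward_difference n (\<lambda>k. F (Suc k) - F k)"
    by (simp add: forward_difference_def c_def algebra_simps sum_subtractf)
  finally show ?thesis .
qed

lemma forward_difference_0 [simp]: "forward_difference 0 F = F 0"
  by (simp add: forward_difference_def)

lemma forward_difference_zero [simp]: "forward_difference n (\<lambda>_. 0) = 0"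
  by (simp add: forward_difference_def)

lemma forward_difference_const: "forward_difference n (\<lambda>_. c) = (if n = 0 then c else 0)"
  by (cases n) (simp_all add: forward_difference_Suc)

lemma forward_difference_diff:
  "forward_difference n (\<lambda>k. F k - G k) = forward_difference n F - forward_difference n G"
  by (simp add: forward_difference_def algebra_simps sum_subtractf)

lemma forward_difference_mult_left:
  "c * forward_difference n F = forward_difference n (\<lambda>k. c * F k)"
  by (simp add: forward_difference_def sum_distrib_left mult_ac)

lemma forward_difference_delta:
  assumes "n \<le> b"
  shows "forward_difference n (\<lambda>k. if k = b then c else 0) = (if n = b then c else 0)"
proof -
  have "forward_difference n (\<lambda>k. if k = b then c else 0)
      = (\<Sum>k\<le>n. if k = b then of_nat (n choose b) * (-1) ^ (n - b) * c else 0)"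
    unfolding forward_difference_def by (intro sum.cong) auto
  also have "\<dots> = (if n = b then c else 0)"
    using assms by simp
  finally show ?thesis .
qed

lemma pochhammer_Suc_diff:
  fixes a :: "'a::comm_ring_1"
  shows "pochhammer (a + 1) (Suc i) - pochhammer a (Suc i) = of_nat (Suc i) * pochhammer (a + 1) i"
  by (simp only: pochhammer_rec[of a] pochhammer_rec'[of "a + 1"]) (simp add: algebra_simps)

lemma forward_difference_pochhammer:
  fixes a :: "'a::{comm_ring_1, ring_char_0}"
  assumes "i \<le> n"
  shows "forward_difference n (\<lambda>k. pochhammer (a + of_nat k) i) = (if i = n then fact n else 0)"
  using assms
proof (induction n arbitrary: i a)
  case 0
  then show ?case by (simp add: forward_difference_def)
next
  case (Suc n)
  show ?case
  proof (cases i)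
    case 0
    then show ?thesis by (simp add: forward_difference_Suc forward_difference_const)
  next
    case (Suc j)
    have "forward_difference (Suc n) (\<lambda>k. pochhammer (a + of_nat k) i)
        = forward_difference n (\<lambda>k. of_nat i * pochhammer ((a + 1) + of_nat k) j)"
      unfolding forward_difference_Suc using pochhammer_Suc_diff[of "a + of_nat _" j]
      by (simp add: Suc algebra_simps)
    also have "\<dots> = of_nat i * forward_difference n (\<lambda>k. pochhammer ((a + 1) + of_nat k) j)"
      by (simp add: forward_difference_mult_left)
    also have "\<dots> = (if i = Suc n then fact (Suc n) else 0)"
      using Suc.IH[of j "a + 1"] Suc.prems \<open>i = Suc j\<close> by simp
    finally show ?thesis .
  qed
qed

lemma has_integral_forward_difference:
  fixes f :: "nat \<Rightarrow> 'a::euclidean_space \<Rightarrow> real"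
  assumes "\<And>k. k \<le> n \<Longrightarrow> (f k has_integral I k) S"
  shows "((\<lambda>x. forward_difference n (\<lambda>k. f k x)) has_integral forward_difference n I) S"
  unfolding forward_difference_def using assms by (intro has_integral_sum has_integral_mult_right) auto

section \<open>The Stieltjes constants as integrals against the fractional part\<close>

definition stieltjes_approx :: "nat \<Rightarrow> nat \<Rightarrow> real" where
  "stieltjes_approx j N =
     (\<Sum>k=1..N. ln (real k) ^ j / real k) - ln (real N) ^ Suc j / real (Suc j)"

definition ln_power_over_x_deriv :: "nat \<Rightarrow> real \<Rightarrow> real" where
  "ln_power_over_x_deriv j x = (real j * ln x ^ (j - 1) - ln x ^ j) / x\<^sup>2"

lemma has_real_derivative_ln_power_over_x:
  assumes "x > 0"
  shows "((\<lambda>x. ln x ^ j / x) has_real_derivative ln_power_over_x_deriv j x) (at x)"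
proof -
  have "((\<lambda>x. ln x ^ j / x) has_real_derivative
          (real j * ln x ^ (j - 1) / x * x - ln x ^ j * 1) / (x * x)) (at x)"
    using assms by (intro DERIV_divide has_real_derivative_ln_power DERIV_ident) auto
  then show ?thesis
    by (rule DERIV_cong) (use assms in \<open>simp add: ln_power_over_x_deriv_def power2_eq_square\<close>)
qed

lemma frac_mult_ln_power_over_x_deriv:
  "frac x * ln_power_over_x_deriv j x
     = real j * (frac x * (ln x ^ (j - 1) / x\<^sup>2)) - frac x * (ln x ^ j / x\<^sup>2)"
  by (simp add: ln_power_over_x_deriv_def algebra_simps diff_divide_distrib)

lemma absolutely_integrable_frac_mult_ln_power_over_x_deriv:
  "(\<lambda>x. frac x * ln_power_over_x_deriv j x) absolutely_integrable_on {1..}"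
  unfolding frac_mult_ln_power_over_x_deriv
  using bounded_frac_power_image[of 1]
  by (intro set_integral_diff(1) set_integrable_mult_right
        absolutely_integrable_bounded_mult_ln_power_over_sq) auto

text \<open>On \<open>[N, N+1)\<close> the fractional part is \<open>x - N\<close>; integrating \<open>(x - N) (ln\<^sup>j x / x)'\<close> by parts,
  with \<open>ln\<^sup>j x / x = (ln\<^sup>j\<^sup>+\<^sup>1 x / (j+1))'\<close>, yields exactly the increment of \<open>stieltjes_approx j\<close>.\<close>
lemma has_integral_frac_mult_ln_power_over_x_deriv_Suc:
  assumes "N \<ge> 1"
  shows "((\<lambda>x. frac x * ln_power_over_x_deriv j x) has_integral
           stieltjes_approx j (Suc N) - stieltjes_approx j N) {real N..real (Suc N)}"
proof -
  define H where "H x = (x - real N) * (ln x ^ j / x) - ln x ^ Suc j / real (Suc j)" for x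
  have H_deriv: "(H has_real_derivative (x - real N) * ln_power_over_x_deriv j x) (at x)"
    if "x > 0" for x
  proof -
    have "((\<lambda>x. x - real N) has_real_derivative 1) (at x)"
      by (auto intro!: derivative_eq_intros)
    from DERIV_diff[OF DERIV_mult[OF this has_real_derivative_ln_power_over_x[OF that]]
                       DERIV_cdivide[OF has_real_derivative_ln_power[OF that, of "Suc j"]]]
    show ?thesis
      unfolding H_def[abs_def] by (rule DERIV_cong) (use that in simp)
  qed
  have ftc: "((\<lambda>x. (x - real N) * ln_power_over_x_deriv j x) has_integral
               H (real (Suc N)) - H (real N)) {real N..real (Suc N)}"
    using assms
    by (intro fundamental_theorem_of_calculus)
       (auto intro!: has_field_derivative_at_within H_deriv
             simp flip: has_real_derivative_iff_has_vector_derivative)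
  have spike: "frac x * ln_power_over_x_deriv j x = (x - real N) * ln_power_over_x_deriv j x"
    if "x \<in> {real N..real (Suc N)} - {real (Suc N)}" for x
  proof -
    from that have "\<lfloor>x\<rfloor> = int N" by (simp add: floor_eq_iff)
    then show ?thesis by (simp add: frac_def)
  qed
  have "((\<lambda>x. frac x * ln_power_over_x_deriv j x) has_integral
           H (real (Suc N)) - H (real N)) {real N..real (Suc N)}"
    by (rule has_integral_spike_finite[of "{real (Suc N)}", OF _ spike ftc]) simp_all
  moreover have "H (real (Suc N)) - H (real N) = stieltjes_approx j (Suc N) - stieltjes_approx j N"
    unfolding H_def stieltjes_approx_def using assms by (simp add: algebra_simps)
  ultimately show ?thesis by simp
qed

lemma has_integral_frac_mult_ln_power_over_x_deriv_atLeastAtMost: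
  assumes "N \<ge> 1"
  shows "((\<lambda>x. frac x * ln_power_over_x_deriv j x) has_integral
           stieltjes_approx j N - (if j = 0 then 1 else 0)) {1..real N}"
  using assms
proof (induction N rule: dec_induct)
  case base
  have "stieltjes_approx j 1 = (if j = 0 then 1 else 0)"
    by (simp add: stieltjes_approx_def)
  then show ?case
    using has_integral_refl(2)[of "\<lambda>x. frac x * ln_power_over_x_deriv j x" 1] by simp
next
  case (step N)
  have "((\<lambda>x. frac x * ln_power_over_x_deriv j x) has_integral
     (stieltjes_approx j N - (if j = 0 then 1 else 0)) + (stieltjes_approx j (Suc N) - stieltjes_approx j N))
     {1..real (Suc N)}"
    by (rule has_integral_combine[OF _ _ step.IH has_integral_frac_mult_ln_power_over_x_deriv_Suc])
       (use step.hyps in auto)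
  then show ?case by simp
qed

lemma stieltjes_eq_integral:
  "stieltjes j = (if j = 0 then 1 else 0) + integral {1..} (\<lambda>x. frac x * ln_power_over_x_deriv j x)"
proof -
  define I where "I = integral {1..} (\<lambda>x. frac x * ln_power_over_x_deriv j x)"
  have "((\<lambda>N. integral {1..real N} (\<lambda>x. frac x * ln_power_over_x_deriv j x)) \<longlongrightarrow> I) sequentially"
    unfolding I_def
    by (rule filterlim_compose[OF tendsto_integral_atLeastAtMost_at_top filterlim_real_sequentially])
       (rule absolutely_integrable_frac_mult_ln_power_over_x_deriv)
  moreover have "\<forall>\<^sub>F N in sequentially.
      integral {1..real N} (\<lambda>x. frac x * ln_power_over_x_deriv j x)
        = stieltjes_approx j N - (if j = 0 then 1 else 0)"
    using eventually_ge_at_top[of 1]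
    by eventually_elim (rule integral_unique[OF has_integral_frac_mult_ln_power_over_x_deriv_atLeastAtMost])
  ultimately have "(\<lambda>N. stieltjes_approx j N - (if j = 0 then 1 else 0)) \<longlonglongrightarrow> I"
    by (rule Lim_transform_eventually)
  from tendsto_add[OF this tendsto_const[of "if j = 0 then 1 else 0"]]
  have "stieltjes_approx j \<longlonglongrightarrow> (if j = 0 then 1 else 0) + I"
    by (simp add: add.commute)
  then show ?thesis
    unfolding I_def stieltjes_def stieltjes_approx_def[abs_def] by (rule limI)
qed

definition frac_moment :: "nat \<Rightarrow> real" where
  "frac_moment p = integral {1..} (\<lambda>x. frac x * (ln x ^ p / x\<^sup>2)) / fact p"

lemma integrable_frac_power_mult_ln_power_over_sq:
  "(\<lambda>x::real. frac x ^ k * (ln x ^ p / x\<^sup>2)) integrable_on {1..}"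
proof -
  have "(\<lambda>x::real. frac x ^ k * (ln x ^ p / x\<^sup>2)) absolutely_integrable_on {1..}"
    using bounded_frac_power_image[of k]
    by (intro absolutely_integrable_bounded_mult_ln_power_over_sq) auto
  then show ?thesis by (rule set_lebesgue_integral_eq_integral(1))
qed

lemma has_integral_frac_mult_ln_power_over_sq:
  "((\<lambda>x. frac x * (ln x ^ p / x\<^sup>2)) has_integral fact p * frac_moment p) {1..}"
  using integrable_integral[OF integrable_frac_power_mult_ln_power_over_sq[of 1 p]]
  by (simp add: frac_moment_def)

lemma stieltjes_div_fact:
  "stieltjes j / fact j = (if j = 0 then 1 else frac_moment (j - 1)) - frac_moment j"
proof -
  have "integral {1..} (\<lambda>x. frac x * ln_power_over_x_deriv j x)
          = real j * (fact (j - 1) * frac_moment (j - 1)) - fact j * frac_moment j"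
    unfolding frac_mult_ln_power_over_x_deriv
    by (intro integral_unique has_integral_diff has_integral_mult_right
          has_integral_frac_mult_ln_power_over_sq)
  moreover have "real j * fact (j - 1) = fact j" if "j > 0"
    using that by (simp add: fact_reduce)
  ultimately show ?thesis
    by (cases "j = 0") (simp_all add: stieltjes_eq_integral field_simps)
qed

lemma sum_stieltjes_div_fact: "(\<Sum>j\<le>M. stieltjes j / fact j) = 1 - frac_moment M"
proof (induction M)
  case 0
  show ?case using stieltjes_div_fact[of 0] by simp
next
  case (Suc M)
  show ?case
    unfolding sum.atMost_Suc Suc.IH stieltjes_div_fact[of "Suc M"] by simp
qed

lemma ell_eq_forward_difference: "ell m n = - forward_difference n (\<lambda>k. frac_moment (m + k))"
proof -
  have "ell m n = - (if n = 0 then 1 else 0) + forward_difference n (\<lambda>k. 1 - frac_moment (m + k))"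
    unfolding ell_def forward_difference_def atLeast0AtMost sum_stieltjes_div_fact by simp
  then show ?thesis
    by (simp add: forward_difference_diff forward_difference_const)
qed

section \<open>Rescaled generalised Laguerre polynomials\<close>

lemma fact_add_eq_fact_mult_pochhammer:
  "(fact (n + i) :: 'a::{comm_ring_1, ring_char_0}) = fact n * pochhammer (of_nat n + 1) i"
  using pochhammer_product'[of "1 :: 'a" n i] by (simp add: pochhammer_fact add.commute)

text \<open>\<open>laguerre m n\<close> is \<open>(-1)\<^sup>n n! / (n + m)!\<close> times the generalised Laguerre polynomial
  \<open>L\<^sub>n\<^sup>(\<^sup>m\<^sup>)\<close>; after the substitution \<open>u = ln x\<close> these are orthogonal for the weight
  \<open>ln\<^sup>m x / x\<^sup>2\<close> on \<open>[1, \<infinity>)\<close>.\<close>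
definition laguerre :: "nat \<Rightarrow> nat \<Rightarrow> real \<Rightarrow> real" where
  "laguerre m n u = forward_difference n (\<lambda>k. u ^ k / fact (m + k))"

lemma has_integral_frac_mult_laguerre:
  "((\<lambda>x. frac x * laguerre m n (ln x) * (ln x ^ m / x\<^sup>2)) has_integral - ell m n) {1..}"
proof -
  have "frac x * laguerre m n (ln x) * (ln x ^ m / x\<^sup>2)
      = forward_difference n (\<lambda>k. frac x * (ln x ^ (m + k) / x\<^sup>2) / fact (m + k))" for x
    unfolding laguerre_def forward_difference_def
    by (simp add: sum_distrib_left sum_distrib_right mult_ac power_add)
  moreover have "((\<lambda>x. forward_difference n (\<lambda>k. frac x * (ln x ^ (m + k) / x\<^sup>2) / fact (m + k)))
                    has_integral forward_difference n (\<lambda>k. frac_moment (m + k))) {1..}"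
  proof (intro has_integral_forward_difference)
    show "((\<lambda>x. frac x * (ln x ^ (m + k) / x\<^sup>2) / fact (m + k)) has_integral frac_moment (m + k)) {1..}"
      for k
      using has_integral_divide[OF has_integral_frac_mult_ln_power_over_sq, of "m + k" "fact (m + k)"]
      by simp
  qed
  ultimately show ?thesis
    by (simp add: ell_eq_forward_difference)
qed

lemma has_integral_ln_power_mult_laguerre:
  assumes "i \<le> n"
  shows "((\<lambda>x. ln x ^ i * laguerre m n (ln x) * (ln x ^ m / x\<^sup>2)) has_integral
           (if i = n then fact n else 0)) {1..}"
proof -
  have "ln x ^ i * laguerre m n (ln x) * (ln x ^ m / x\<^sup>2)
      = forward_difference n (\<lambda>k. (ln x ^ (m + k + i) / x\<^sup>2) / fact (m + k))" for x :: real
    unfolding laguerre_def forward_difference_def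
    by (simp add: sum_distrib_left sum_distrib_right mult_ac power_add)
  moreover have "((\<lambda>x. ln x ^ (m + k + i) / x\<^sup>2 / fact (m + k)) has_integral
                     pochhammer ((real m + 1) + real k) i) {1..}" for k
  proof -
    have "fact (m + k + i) / fact (m + k) = pochhammer ((real m + 1) + real k) i"
      by (simp only: fact_add_eq_fact_mult_pochhammer[of "m + k" i]) (simp add: add_ac)
    then show ?thesis
      using has_integral_divide[OF has_integral_ln_power_over_sq, of "m + k + i" "fact (m + k)"]
      by simp
  qed
  then have "((\<lambda>x. forward_difference n (\<lambda>k. (ln x ^ (m + k + i) / x\<^sup>2) / fact (m + k)))
               has_integral forward_difference n (\<lambda>k. pochhammer ((real m + 1) + real k) i)) {1..}"
    by (intro has_integral_forward_difference)
  ultimately show ?thesis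
    using forward_difference_pochhammer[OF assms, of "real m + 1"] by simp
qed

lemma has_integral_laguerre_orthogonal:
  "((\<lambda>x. laguerre m a (ln x) * laguerre m b (ln x) * (ln x ^ m / x\<^sup>2)) has_integral
      (if a = b then fact a / fact (m + a) else 0)) {1..}"
proof -
  have *: "((\<lambda>x. laguerre m a (ln x) * laguerre m b (ln x) * (ln x ^ m / x\<^sup>2)) has_integral
      (if a = b then fact b / fact (m + b) else 0)) {1..}" if "a \<le> b" for a b
  proof -
    have expand: "(\<lambda>x. laguerre m a (ln x) * laguerre m b (ln x) * (ln x ^ m / x\<^sup>2))
        = (\<lambda>x. forward_difference a
                 (\<lambda>i. ln x ^ i * laguerre m b (ln x) * (ln x ^ m / x\<^sup>2) / fact (m + i)))"
      unfolding laguerre_def[of m a] forward_difference_def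
      by (simp add: sum_distrib_left sum_distrib_right mult_ac)
    have "((\<lambda>x. ln x ^ i * laguerre m b (ln x) * (ln x ^ m / x\<^sup>2) / fact (m + i))
             has_integral (if i = b then fact b / fact (m + b) else 0)) {1..}"
      if "i \<le> a" for i
      using has_integral_divide[OF has_integral_ln_power_mult_laguerre, of i b m "fact (m + i)"]
        \<open>a \<le> b\<close> that by (cases "i = b") auto
    then show ?thesis
      unfolding expand forward_difference_delta[OF that, symmetric]
      by (rule has_integral_forward_difference)
  qed
  show ?thesis
  proof (cases "a \<le> b")
    case True
    with *[of a b] show ?thesis by (cases "a = b") simp_all
  next
    case False
    with *[of b a] show ?thesis by (simp add: mult_ac)
  qed
qed

section \<open>Bessel's inequality and Cauchy-Schwarz\<close>

lemma bessel_inequality_has_integral: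
  fixes f w :: "'a::euclidean_space \<Rightarrow> real" and \<phi> :: "nat \<Rightarrow> 'a \<Rightarrow> real"
  assumes w_nonneg: "\<And>x. x \<in> S \<Longrightarrow> 0 \<le> w x"
    and f_sq: "((\<lambda>x. f x ^ 2 * w x) has_integral I) S"
    and coeff: "\<And>n. ((\<lambda>x. f x * \<phi> n x * w x) has_integral c n) S"
    and orth: "\<And>a b. ((\<lambda>x. \<phi> a x * \<phi> b x * w x) has_integral (if a = b then h a else 0)) S"
    and h_pos: "\<And>n. 0 < h n"
  shows "(\<Sum>n<N. c n ^ 2 / h n) \<le> I"
proof -
  define P where "P x = (\<Sum>n<N. c n / h n * \<phi> n x)" for x
  define B where "B = (\<Sum>n<N. c n ^ 2 / h n)"
  have "((\<lambda>x. \<Sum>n<N. c n / h n * (f x * \<phi> n x * w x)) has_integral (\<Sum>n<N. c n / h n * c n)) S"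
    by (intro has_integral_sum has_integral_mult_right coeff) auto
  then have cross: "((\<lambda>x. f x * P x * w x) has_integral B) S"
    by (simp add: P_def B_def sum_distrib_left sum_distrib_right mult_ac power2_eq_square)
  have "((\<lambda>x. \<Sum>a<N. c a / h a * (\<Sum>b<N. c b / h b * (\<phi> a x * \<phi> b x * w x))) has_integral
          (\<Sum>a<N. c a / h a * (\<Sum>b<N. c b / h b * (if a = b then h a else 0)))) S"
    by (intro has_integral_sum has_integral_mult_right orth) auto
  moreover have "(\<Sum>b<N. c b / h b * (if a = b then h a else 0)) = c a" if "a < N" for a
  proof -
    have "(\<Sum>b<N. c b / h b * (if a = b then h a else 0)) = (\<Sum>b<N. if b = a then c a else 0)"
      using h_pos[of a] by (intro sum.cong) auto
    then show ?thesis using that by simp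
  qed
  then have "(\<Sum>a<N. c a / h a * (\<Sum>b<N. c b / h b * (if a = b then h a else 0))) = B"
    unfolding B_def by (simp add: power2_eq_square)
  ultimately have square: "((\<lambda>x. P x * P x * w x) has_integral B) S"
    by (simp add: P_def sum_product sum_distrib_left sum_distrib_right mult_ac)
  have "((\<lambda>x. f x ^ 2 * w x - 2 * (f x * P x * w x) + P x * P x * w x) has_integral I - 2 * B + B) S"
    by (intro has_integral_add has_integral_diff has_integral_mult_right f_sq cross square)
  then have "((\<lambda>x. (f x - P x) ^ 2 * w x) has_integral I - B) S"
    by (simp add: power2_eq_square algebra_simps)
  then have "0 \<le> I - B"
    by (rule has_integral_nonneg) (simp add: w_nonneg)
  then show ?thesis by (simp add: B_def)
qed

lemma sum_choose_mult_ell_sq_le: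
  "(\<Sum>n<N. real ((n + m) choose n) * ell m n ^ 2)
     \<le> integral {1..} (\<lambda>x::real. frac x ^ 2 * ln x ^ m / x ^ 2) / fact m"
proof -
  define J where "J = integral {1..} (\<lambda>x::real. frac x ^ 2 * ln x ^ m / x ^ 2)"
  have frac_sq: "((\<lambda>x. frac x ^ 2 * (ln x ^ m / x\<^sup>2)) has_integral J) {1..}"
    using integrable_integral[OF integrable_frac_power_mult_ln_power_over_sq[of 2 m]]
    by (simp add: J_def)
  have "(\<Sum>n<N. (- ell m n) ^ 2 / (fact n / fact (m + n))) \<le> J"
    by (rule bessel_inequality_has_integral[OF _ frac_sq has_integral_frac_mult_laguerre
          has_integral_laguerre_orthogonal]) auto
  also have "(\<Sum>n<N. (- ell m n) ^ 2 / (fact n / fact (m + n)))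
               = fact m * (\<Sum>n<N. real ((n + m) choose n) * ell m n ^ 2)"
    unfolding sum_distrib_left
    by (intro sum.cong refl) (simp add: binomial_fact field_simps)
  finally show ?thesis
    by (simp add: J_def pos_le_divide_eq mult.commute)
qed

lemma summable_choose_mult_ell_sq:
  "summable (\<lambda>n. real ((n + m) choose n) * ell m n ^ 2)"
  "(\<Sum>n. real ((n + m) choose n) * ell m n ^ 2)
     \<le> integral {1..} (\<lambda>x::real. frac x ^ 2 * ln x ^ m / x ^ 2) / fact m"
  using summableI_nonneg_bounded[OF _ sum_choose_mult_ell_sq_le]
    suminf_le_const[OF _ sum_choose_mult_ell_sq_le]
  by auto

lemma Cauchy_Schwarz_suminf:
  fixes a b :: "nat \<Rightarrow> real"
  assumes a: "summable (\<lambda>n. a n ^ 2)" and b: "summable (\<lambda>n. b n ^ 2)"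
  shows "summable (\<lambda>n. a n * b n)"
    and "(\<Sum>n. a n * b n) \<le> sqrt ((\<Sum>n. a n ^ 2) * (\<Sum>n. b n ^ 2))"
proof -
  have "summable (\<lambda>n. (a n ^ 2 + b n ^ 2) / 2)"
    using a b by (intro summable_divide summable_add)
  moreover have "norm (a n * b n) \<le> (a n ^ 2 + b n ^ 2) / 2" for n
    using sum_squares_bound[of "\<bar>a n\<bar>" "\<bar>b n\<bar>"] by (simp add: abs_mult)
  ultimately show "summable (\<lambda>n. a n * b n)"
    by (rule summable_comparison_test')
  moreover have "(\<Sum>n<N. a n * b n) \<le> sqrt ((\<Sum>n. a n ^ 2) * (\<Sum>n. b n ^ 2))" for N
  proof (rule real_le_rsqrt)
    have "(\<Sum>n<N. a n * b n)\<^sup>2 \<le> (\<Sum>n<N. a n ^ 2) * (\<Sum>n<N. b n ^ 2)"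
      by (rule Cauchy_Schwarz_ineq_sum)
    also have "\<dots> \<le> (\<Sum>n. a n ^ 2) * (\<Sum>n. b n ^ 2)"
      using a b by (intro mult_mono sum_le_suminf suminf_nonneg sum_nonneg) auto
    finally show "(\<Sum>n<N. a n * b n)\<^sup>2 \<le> (\<Sum>n. a n ^ 2) * (\<Sum>n. b n ^ 2)" .
  qed
  ultimately show "(\<Sum>n. a n * b n) \<le> sqrt ((\<Sum>n. a n ^ 2) * (\<Sum>n. b n ^ 2))"
    by (rule suminf_le_const)
qed

lemma sums_choose_mult_power:
  fixes r :: real
  assumes "\<bar>r\<bar> < 1"
  shows "(\<lambda>n. real ((n + m) choose n) * r ^ n) sums (1 / (1 - r) ^ (m + 1))"
proof -
  have "(\<lambda>n. (- real (m + 1) gchoose n) * (- r) ^ n) sums (1 + - r) powr (- real (m + 1))"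
    using assms by (intro gen_binomial_real) simp
  moreover have "(- real (m + 1) gchoose n) * (- r) ^ n = real ((n + m) choose n) * r ^ n" for n
  proof -
    have "(- real (m + 1) gchoose n) = (-1) ^ n * ((real (m + 1) + of_nat n - 1) gchoose n)"
      by (rule gbinomial_minus)
    also have "real (m + 1) + of_nat n - 1 = real (n + m)"
      by simp
    finally show ?thesis
      by (simp add: binomial_gbinomial power_mult_distrib[symmetric])
  qed
  moreover have "(1 + - r) powr (- real (m + 1)) = 1 / (1 - r) ^ (m + 1)"
  proof -
    have realpow: "(1 - r) powr real (m + 1) = (1 - r) ^ (m + 1)"
      using assms by (intro powr_realpow) simp
    show ?thesis
      by (simp only: diff_conv_add_uminus[symmetric] powr_minus realpow) (simp add: divide_inverse)
  qed
  ultimately show ?thesis by simp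
qed

lemma norm_one_minus_div_sq:
  fixes s :: complex
  assumes "s \<noteq> 0"
  shows "cmod ((1 - s) / s) ^ 2 = 1 - (2 * Re s - 1) / cmod s ^ 2"
proof -
  have "cmod (1 - s) ^ 2 = cmod s ^ 2 - (2 * Re s - 1)"
    unfolding cmod_power2 by (simp add: power2_eq_square algebra_simps)
  then show ?thesis
    using assms by (simp add: norm_divide field_simps)
qed

lemma sums_choose_mult_norm_one_minus_div_sq_power:
  fixes s :: complex
  assumes "Re s > 1/2"
  shows "(\<lambda>n. real ((n + m) choose n) * (cmod ((1 - s) / s) ^ 2) ^ n)
           sums ((cmod s / sqrt (2 * Re s - 1)) ^ (m + 1))\<^sup>2"
proof -
  define K where "K = cmod s / sqrt (2 * Re s - 1)"
  have "s \<noteq> 0" and "2 * Re s - 1 > 0"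
    using assms by auto
  then have one_minus: "1 - cmod ((1 - s) / s) ^ 2 = inverse (K\<^sup>2)" and "K > 0"
    using norm_one_minus_div_sq by (simp_all add: K_def power_divide)
  moreover have "0 < inverse (K\<^sup>2)"
    using \<open>K > 0\<close> by simp
  ultimately have "\<bar>cmod ((1 - s) / s) ^ 2\<bar> < 1"
    unfolding abs_power2 by linarith
  then have "(\<lambda>n. real ((n + m) choose n) * (cmod ((1 - s) / s) ^ 2) ^ n) sums (K\<^sup>2) ^ (m + 1)"
    using sums_choose_mult_power[of "cmod ((1 - s) / s) ^ 2" m] one_minus
    by (simp add: power_inverse flip: inverse_eq_divide)
  also have "(K\<^sup>2) ^ (m + 1) = (K ^ (m + 1))\<^sup>2"
    by (simp only: power_mult[symmetric] mult.commute)
  finally show ?thesis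
    unfolding K_def .
qed

theorem mainTheorem10:
  fixes m :: nat and s :: complex
  assumes "Re s > 1/2"
  shows "summable (\<lambda>n. real ((n + m) choose n) * \<bar>ell m n\<bar> * cmod ((1 - s) / s) ^ n)
    \<and> (\<lambda>x::real. frac x ^ 2 * ln x ^ m / x ^ 2) integrable_on {1..}
    \<and> (\<Sum>n. real ((n + m) choose n) * \<bar>ell m n\<bar> * cmod ((1 - s) / s) ^ n)
        \<le> sqrt (1 / fact m * integral {1..} (\<lambda>x::real. frac x ^ 2 * ln x ^ m / x ^ 2))
           * (cmod s / sqrt (2 * Re s - 1)) ^ (m + 1)"
proof -
  define z where "z = cmod ((1 - s) / s)"
  define K where "K = cmod s / sqrt (2 * Re s - 1)"
  define C where "C n = real ((n + m) choose n)" for n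
  define a where "a n = sqrt (C n) * \<bar>ell m n\<bar>" for n
  define b where "b n = sqrt (C n) * z ^ n" for n
  have "(\<lambda>n. b n ^ 2) = (\<lambda>n. C n * (z\<^sup>2) ^ n)"
    by (simp add: b_def C_def power_mult_distrib flip: power_mult) (simp add: mult.commute)
  then have b_sq: "(\<lambda>n. b n ^ 2) sums (K ^ (m + 1))\<^sup>2"
    using sums_choose_mult_norm_one_minus_div_sq_power[OF assms] by (simp add: z_def K_def C_def)
  have a_sq: "(\<lambda>n. a n ^ 2) = (\<lambda>n. C n * ell m n ^ 2)"
    by (simp add: a_def C_def power_mult_distrib)
  have ab: "(\<lambda>n. a n * b n) = (\<lambda>n. C n * \<bar>ell m n\<bar> * z ^ n)"
    by (simp add: a_def b_def C_def mult_ac flip: real_sqrt_mult)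
  have "(\<Sum>n. a n * b n) \<le> sqrt ((\<Sum>n. C n * ell m n ^ 2) * (K ^ (m + 1))\<^sup>2)"
    using Cauchy_Schwarz_suminf(2)[of a b] summable_choose_mult_ell_sq(1)[of m] b_sq
    by (simp add: a_sq C_def sums_iff)
  also have "\<dots> = sqrt (\<Sum>n. C n * ell m n ^ 2) * K ^ (m + 1)"
    using assms by (simp add: K_def real_sqrt_mult)
  also have "\<dots> \<le> sqrt (1 / fact m * integral {1..} (\<lambda>x::real. frac x ^ 2 * ln x ^ m / x ^ 2))
                    * K ^ (m + 1)"
    using summable_choose_mult_ell_sq(2)[of m] assms
    by (intro mult_right_mono real_sqrt_le_mono) (simp_all add: C_def K_def)
  moreover have "summable (\<lambda>n. a n * b n)"
    using Cauchy_Schwarz_suminf(1)[of a b] summable_choose_mult_ell_sq(1)[of m] b_sq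
    by (simp add: a_sq C_def sums_iff)
  moreover have "(\<lambda>x::real. frac x ^ 2 * ln x ^ m / x ^ 2) integrable_on {1..}"
    using integrable_frac_power_mult_ln_power_over_sq[of 2 m] by simp
  ultimately show ?thesis
    unfolding ab z_def K_def C_def by auto
qed

end
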